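(* Let $k,N\in\mathbb{N}$ and let $a_1,a_2,\dots$ be complex numbers; set $a_0:=1$. Define $a_{n,j}:=a_j$ if $n\le N$ and $a_{n,j}:=0$ otherwise ($n,j\ge 1$). Then $$\hat{B}_{k+N,N}(a_0,a_1,\dots,a_k)=\sum_{L\vdash k}\frac{1}{C_{stb}(L)}\sum_{\sigma\in S_{\ell(L)}}\operatorname{sign}(\sigma)\,\mathbb{A}_{\sigma,L}\big(\{a_{n,j}\}_{n,j\ge1}\big).$$
   Context: The ordinary Bell polynomial is $\hat{B}_{n,k}(x_1,\dots,x_{n-k+1}):=\sum\frac{k!}{j_1!\cdots j_{n-k+1}!}x_1^{j_1}\cdots x_{n-k+1}^{j_{n-k+1}}$, summed over integers $j_i\ge0$ with $\sum_i j_i=k$ and $\sum_i i\,j_i=n$; equivalently $\big(\sum_{j\ge1}x_jt^j\big)^k=\sum_{n\ge k}\hat{B}_{n,k}(x_1,\dots,x_{n-k+1})t^n$ (here the arguments are $x_1=a_0,x_2=a_1,\dots$). $L\vdash k$ means $L=[x_1,\dots,x_m]$ is a partition of $k$ (multiset of positive integers summing to $k$), $\ell(L)=m$, and $C_{stb}(L):=\prod_x(\#\{i:x_i=x\})!$ over distinct values $x$ in $L$. Writing $L=[k_1,\dots,k_m]$ with $k_1\le\cdots\le k_m$ and, for $\sigma\in S_m$, decomposing $\sigma$ into disjoint cycles $C_1,\dots,C_r$ (fixed points kept as length-one cycles), $\mathbb{A}_{\sigma,L}(\{a_{n,j}\}):=\prod_{t=1}^{r}\big(\sum_{n=1}^{\infty}\prod_{i\in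 C_t}a_{n,k_i}\big)$ (finite sums here). *)

theory Defs
  imports Complex_Main "HOL-Combinatorics.Combinatorics" "HOL-Library.FuncSet"
begin

text \<open>Exponent vectors are extensional functions on {1..n-k+1}; each j_i is at most k.\<close>
definition ord_bell :: "nat \<Rightarrow> nat \<Rightarrow> (nat \<Rightarrow> complex) \<Rightarrow> complex" where
  "ord_bell n k x =
     (\<Sum>j \<in> {j \<in> {1..n-k+1} \<rightarrow>\<^sub>E {0..k}.
              (\<Sum>i\<in>{1..n-k+1}. j i) = k \<and> (\<Sum>i\<in>{1..n-k+1}. i * j i) = n}.
        of_nat (fact k) / of_nat (\<Prod>i\<in>{1..n-k+1}. fact (j i))
        * (\<Prod>i\<in>{1..n-k+1}. x i ^ j i))"

definition partitions_of :: "nat \<Rightarrow> nat list set" where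
  "partitions_of k = {L. sorted L \<and> (\<forall>x\<in>set L. 0 < x) \<and> sum_list L = k}"

definition C_stb :: "nat list \<Rightarrow> nat" where
  "C_stb L = (\<Prod>x\<in>set L. fact (count_list L x))"

text \<open>Cycles of a permutation sigma of {0..<m} (fixed points give singleton cycles).\<close>
definition cycles_of :: "nat \<Rightarrow> (nat \<Rightarrow> nat) \<Rightarrow> nat set set" where
  "cycles_of m \<sigma> = (\<lambda>i. orbit \<sigma> i) ` {..<m}"

text \<open>A_{sigma,L}({a_{n,j}}) = prod over cycles C of sum_{n>=1} prod_{i in C} a_{n,k_i}
  (positions are 0-based: index i refers to L ! i).\<close>
definition A_sigma_L :: "(nat \<Rightarrow> nat) \<Rightarrow> nat list \<Rightarrow> (nat \<Rightarrow> nat \<Rightarrow> complex) \<Rightarrow> complex" where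
  "A_sigma_L \<sigma> L a =
     (\<Prod>C\<in>cycles_of (length L) \<sigma>. (\<Sum>n. \<Prod>i\<in>C. a (Suc n) (L ! i)))"

end

theory Submission
  imports Defs
begin

(* With a_{n,j} = a_j for n <= N and 0 beyond, every cycle of sigma contributes a factor N, so
   A_{sigma,L} = N^c(sigma) a_{k_1} ... a_{k_m}, where c(sigma) is the number of cycles.
   N^c(sigma) counts the maps g : [m] -> [N] with g o sigma = g, and for a fixed g the signs of the
   sigma fixing g add up to 1 if g is injective and to 0 otherwise (composing with the transposition
   of two points with equal values is a sign-reversing involution).  Hence
   sum_sigma sign(sigma) N^c(sigma) = N (N-1) ... (N-m+1).
   On the other side, an exponent vector (j_1, ..., j_{k+1}) of B_{k+N,N} is the multiplicity vector
   of a partition of k+N into N parts; lowering every part by one and dropping the zeros gives a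
   partition L of k into at most N parts, and the multinomial coefficient N!/(j_1! ... j_{k+1}!)
   becomes N (N-1) ... (N-l(L)+1) / C_stb(L). *)

lemma permutation_orbit_eq:
  assumes "permutation f" "y \<in> orbit f x"
  shows "orbit f y = orbit f x"
  using assms cyclic_on_orbit' orbit_cyclic_eq3 by metis

lemma cycles_of_subset:
  assumes "\<sigma> permutes {..<m}" "C \<in> cycles_of m \<sigma>"
  shows "C \<subseteq> {..<m}"
  using assms permutes_orbit_subset by (fastforce simp: cycles_of_def)

lemma prod_cycles_of:
  assumes "\<sigma> permutes {..<m}"
  shows "(\<Prod>C\<in>cycles_of m \<sigma>. prod g C) = (\<Prod>i<m. g i)"
proof -
  have perm: "permutation \<sigma>"
    using assms by (rule permutes_imp_permutation[OF finite_lessThan])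
  have "\<Union>(cycles_of m \<sigma>) = {..<m}"
    using cycles_of_subset[OF assms] permutation_self_in_orbit[OF perm]
    by (auto simp: cycles_of_def)
  moreover have "C \<inter> D = {}"
    if C: "C \<in> cycles_of m \<sigma>" and D: "D \<in> cycles_of m \<sigma>" and "C \<noteq> D" for C D
  proof (rule ccontr)
    assume "C \<inter> D \<noteq> {}"
    then obtain z where "z \<in> C" "z \<in> D" by blast
    moreover obtain i j where "C = orbit \<sigma> i" "D = orbit \<sigma> j"
      using C D by (auto simp: cycles_of_def)
    ultimately show False
      using \<open>C \<noteq> D\<close> permutation_orbit_eq[OF perm] by metis
  qed
  moreover have "finite C" if "C \<in> cycles_of m \<sigma>" for C
    using cycles_of_subset[OF assms that] finite_subset by blast
  ultimately show ?thesis
    using prod.Union_disjoint[of "cycles_of m \<sigma>" g] by simp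
qed

lemma image_orbit_invariant:
  assumes "permutation \<sigma>" "g \<circ> \<sigma> = g"
  shows "g ` orbit \<sigma> i = {g i}"
proof -
  have "g j = g i" if "j \<in> orbit \<sigma> i" for j
    using that by induction (metis comp_apply assms(2))+
  then show ?thesis
    using permutation_self_in_orbit[OF assms(1)] by blast
qed

lemma card_invariant_funcset:
  assumes \<sigma>: "\<sigma> permutes {..<m}"
  shows "card {g \<in> {..<m} \<rightarrow>\<^sub>E B. g \<circ> \<sigma> = g} = card B ^ card (cycles_of m \<sigma>)"
proof -
  have perm: "permutation \<sigma>"
    using \<sigma> by (rule permutes_imp_permutation[OF finite_lessThan])
  define spread where "spread F = (\<lambda>i\<in>{..<m}. F (orbit \<sigma> i))" for F :: "nat set \<Rightarrow> 'a"
  define collect where "collect g = (\<lambda>C\<in>cycles_of m \<sigma>. the_elem (g ` C))" for g :: "nat \<Rightarrow> 'a"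
  have spread_invariant: "spread F \<circ> \<sigma> = spread F" for F
  proof
    fix i show "(spread F \<circ> \<sigma>) i = spread F i"
      using permutes_in_image[OF \<sigma>, of i] permutes_not_in[OF \<sigma>, of i]
      by (cases "i < m") (simp_all add: spread_def permutation_orbit_step[OF perm])
  qed
  have "bij_betw spread (cycles_of m \<sigma> \<rightarrow>\<^sub>E B) {g \<in> {..<m} \<rightarrow>\<^sub>E B. g \<circ> \<sigma> = g}"
  proof (rule bij_betwI[where g = collect])
    show "spread \<in> (cycles_of m \<sigma> \<rightarrow>\<^sub>E B) \<rightarrow> {g \<in> {..<m} \<rightarrow>\<^sub>E B. g \<circ> \<sigma> = g}"
    proof (intro funcsetI CollectI conjI)
      fix F assume F: "F \<in> cycles_of m \<sigma> \<rightarrow>\<^sub>E B"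
      show "spread F \<in> {..<m} \<rightarrow>\<^sub>E B"
        using F by (auto simp: spread_def cycles_of_def)
      show "spread F \<circ> \<sigma> = spread F" by (rule spread_invariant)
    qed
    show "collect \<in> {g \<in> {..<m} \<rightarrow>\<^sub>E B. g \<circ> \<sigma> = g} \<rightarrow> (cycles_of m \<sigma> \<rightarrow>\<^sub>E B)"
    proof
      fix g assume g: "g \<in> {g \<in> {..<m} \<rightarrow>\<^sub>E B. g \<circ> \<sigma> = g}"
      then show "collect g \<in> cycles_of m \<sigma> \<rightarrow>\<^sub>E B"
        using image_orbit_invariant[OF perm, of g] by (auto simp: collect_def cycles_of_def)
    qed
    show "collect (spread F) = F" if "F \<in> cycles_of m \<sigma> \<rightarrow>\<^sub>E B" for F
    proof
      fix C show "collect (spread F) C = F C"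
      proof (cases "C \<in> cycles_of m \<sigma>")
        case True
        then obtain i where i: "i < m" "C = orbit \<sigma> i" by (auto simp: cycles_of_def)
        have "spread F ` C = {spread F i}"
          using image_orbit_invariant[OF perm spread_invariant] i(2) by simp
        moreover have "spread F i = F C"
          using i by (simp add: spread_def)
        ultimately show ?thesis
          using True by (simp add: collect_def)
      next
        case False
        then show ?thesis
          using PiE_arb[OF that False] by (simp add: collect_def)
      qed
    qed
    show "spread (collect g) = g" if g: "g \<in> {g \<in> {..<m} \<rightarrow>\<^sub>E B. g \<circ> \<sigma> = g}" for g
    proof
      fix i show "spread (collect g) i = g i"
      proof (cases "i < m")
        case True
        then have "orbit \<sigma> i \<in> cycles_of m \<sigma>"
          by (simp add: cycles_of_def)
        then show ?thesis
          using True g image_orbit_invariant[OF perm, of g i] by (simp add: spread_def collect_def)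
      next
        case False
        then show ?thesis
          using g PiE_arb[of g "{..<m}" "\<lambda>_. B" i] by (simp add: spread_def)
      qed
    qed
  qed
  then have "card {g \<in> {..<m} \<rightarrow>\<^sub>E B. g \<circ> \<sigma> = g} = card (cycles_of m \<sigma> \<rightarrow>\<^sub>E B)"
    by (rule bij_betw_same_card[symmetric])
  also have "\<dots> = card B ^ card (cycles_of m \<sigma>)"
    by (simp add: card_funcsetE cycles_of_def)
  finally show ?thesis .
qed

lemma sum_sign_stabilizer:
  assumes "finite S"
  shows "(\<Sum>\<sigma> | \<sigma> permutes S \<and> f \<circ> \<sigma> = f. sign \<sigma>) = (if inj_on f S then 1 else (0::int))"
proof (cases "inj_on f S")
  case True
  have "\<sigma> = id" if "\<sigma> permutes S" "f \<circ> \<sigma> = f" for \<sigma>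
  proof
    fix i show "\<sigma> i = id i"
      using permutes_in_image[OF that(1), of i] permutes_not_in[OF that(1), of i]
        inj_onD[OF True, of "\<sigma> i" i] fun_cong[OF that(2), of i]
      by (cases "i \<in> S") auto
  qed
  then have "{\<sigma>. \<sigma> permutes S \<and> f \<circ> \<sigma> = f} = {id}"
    by (auto simp: permutes_id)
  then show ?thesis
    using True by simp
next
  case False
  then obtain p q where pq: "p \<in> S" "q \<in> S" "p \<noteq> q" "f p = f q"
    by (auto simp: inj_on_def)
  define G where "G = {\<sigma>. \<sigma> permutes S \<and> f \<circ> \<sigma> = f}"
  define \<tau> where "\<tau> = transpose p q"
  have f\<tau>: "f \<circ> \<tau> = f"
    using pq by (auto simp: \<tau>_def transpose_def)
  have \<tau>G: "\<tau> \<circ> \<sigma> \<in> G" if "\<sigma> \<in> G" for \<sigma>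
    using that pq f\<tau> permutes_compose[of \<sigma> S \<tau>] permutes_swap_id[of p S q]
    by (auto simp: G_def \<tau>_def comp_assoc[symmetric])
  have sign\<tau>: "sign (\<tau> \<circ> \<sigma>) = - sign \<sigma>" if "\<sigma> \<in> G" for \<sigma>
    using that pq assms
    by (simp add: G_def \<tau>_def sign_compose permutation_swap_id permutes_imp_permutation sign_swap_id)
  have \<tau>\<tau>: "\<tau> \<circ> (\<tau> \<circ> \<sigma>) = \<sigma>" for \<sigma>
    by (simp add: \<tau>_def fun_eq_iff)
  have "(\<Sum>\<sigma>\<in>G. sign \<sigma>) = (\<Sum>\<sigma>\<in>G. sign (\<tau> \<circ> \<sigma>))"
    by (rule sum.reindex_bij_witness[where i = "(\<circ>) \<tau>" and j = "(\<circ>) \<tau>"])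
       (simp_all add: \<tau>G \<tau>\<tau>)
  also have "\<dots> = - (\<Sum>\<sigma>\<in>G. sign \<sigma>)"
    by (simp add: sign\<tau> sum_negf)
  finally show ?thesis
    using False by (simp add: G_def)
qed

lemma sum_sign_pow_card_cycles:
  "(\<Sum>\<sigma> | \<sigma> permutes {..<m}. sign \<sigma> * int n ^ card (cycles_of m \<sigma>)) = int (\<Prod>i<m. n - i)"
proof -
  let ?P = "{\<sigma>. \<sigma> permutes {..<m}}" and ?F = "{..<m} \<rightarrow>\<^sub>E {..<n}"
  have "(\<Sum>\<sigma>\<in>?P. sign \<sigma> * int n ^ card (cycles_of m \<sigma>))
      = (\<Sum>\<sigma>\<in>?P. \<Sum>g | g \<in> ?F \<and> g \<circ> \<sigma> = g. sign \<sigma>)"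
    by (intro sum.cong refl) (simp add: card_invariant_funcset flip: of_nat_power)
  also have "\<dots> = (\<Sum>g\<in>?F. \<Sum>\<sigma> | \<sigma> \<in> ?P \<and> g \<circ> \<sigma> = g. sign \<sigma>)"
    by (rule sum.swap_restrict) (simp_all add: finite_permutations finite_PiE)
  also have "\<dots> = (\<Sum>g\<in>?F. if inj_on g {..<m} then 1 else 0)"
    by (intro sum.cong refl) (simp add: sum_sign_stabilizer)
  also have "\<dots> = int (card {g \<in> ?F. inj_on g {..<m}})"
    by (simp add: sum.If_cases finite_PiE Int_def conj_commute)
  also have "card {g \<in> ?F. inj_on g {..<m}} = (\<Prod>i<m. n - i)"
    using card_inj_on_subset_funcset[of "{..<m}" "{..<n}" "{..<m}"]
    by (simp add: atLeast0LessThan)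
  finally show ?thesis .
qed

lemma A_sigma_L_truncated:
  assumes "\<sigma> permutes {..<length L}"
  shows "A_sigma_L \<sigma> L (\<lambda>n j. if n \<le> N then a j else 0)
       = of_nat N ^ card (cycles_of (length L) \<sigma>) * prod_list (map a L)"
proof -
  have cycle_factor: "(\<Sum>n. \<Prod>i\<in>C. if Suc n \<le> N then a (L ! i) else 0)
      = of_nat N * (\<Prod>i\<in>C. a (L ! i))" if "C \<in> cycles_of (length L) \<sigma>" for C
  proof -
    have "C \<noteq> {}"
      using that by (auto simp: cycles_of_def orbit_nonempty)
    moreover have "finite C"
      using cycles_of_subset[OF assms that] finite_subset by blast
    ultimately have "(\<lambda>n. \<Prod>i\<in>C. if Suc n \<le> N then a (L ! i) else 0)
        = (\<lambda>n. if n < N then \<Prod>i\<in>C. a (L ! i) else 0)"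
      by (auto simp: fun_eq_iff)
    moreover have "(\<Sum>n. if n < N then \<Prod>i\<in>C. a (L ! i) else 0)
        = (\<Sum>n<N. if n < N then \<Prod>i\<in>C. a (L ! i) else 0)"
      by (rule suminf_finite) auto
    ultimately show ?thesis
      by simp
  qed
  have "A_sigma_L \<sigma> L (\<lambda>n j. if n \<le> N then a j else 0)
      = (\<Prod>C\<in>cycles_of (length L) \<sigma>. of_nat N * (\<Prod>i\<in>C. a (L ! i)))"
    unfolding A_sigma_L_def by (rule prod.cong) (simp_all add: cycle_factor)
  also have "\<dots> = of_nat N ^ card (cycles_of (length L) \<sigma>) * (\<Prod>i<length L. a (L ! i))"
    by (simp add: prod.distrib prod_cycles_of[OF assms])
  also have "(\<Prod>i<length L. a (L ! i)) = prod_list (map a L)"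
    by (simp add: prod.list_conv_set_nth atLeast0LessThan)
  finally show ?thesis .
qed

lemma sum_sign_A_sigma_L_truncated:
  "(\<Sum>\<sigma>\<in>{\<sigma>. \<sigma> permutes {..<length L}}.
      of_int (sign \<sigma>) * A_sigma_L \<sigma> L (\<lambda>n j. if n \<le> N then a j else 0))
    = of_nat (\<Prod>i<length L. N - i) * prod_list (map a L)"
proof -
  have "(\<Sum>\<sigma>\<in>{\<sigma>. \<sigma> permutes {..<length L}}.
      of_int (sign \<sigma>) * A_sigma_L \<sigma> L (\<lambda>n j. if n \<le> N then a j else 0))
    = of_int (\<Sum>\<sigma> | \<sigma> permutes {..<length L}. sign \<sigma> * int N ^ card (cycles_of (length L) \<sigma>))
        * prod_list (map a L)"
    by (simp add: A_sigma_L_truncated sum_distrib_right mult.assoc)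
  then show ?thesis
    by (simp only: sum_sign_pow_card_cycles of_int_of_nat_eq)
qed

lemma sum_atLeast1_Suc_atMost: "(\<Sum>i\<in>{1..Suc k}. f i) = f 1 + (\<Sum>v\<in>{1..k}. f (Suc v))"
  by (simp only: sum.atLeast_Suc_atMost[of 1 "Suc k"] sum.shift_bounds_cl_Suc_ivl)

lemma prod_atLeast1_Suc_atMost: "(\<Prod>i\<in>{1..Suc k}. f i) = f 1 * (\<Prod>v\<in>{1..k}. f (Suc v))"
  by (simp only: prod.atLeast_Suc_atMost[of 1 "Suc k"] prod.shift_bounds_cl_Suc_ivl)

lemma fact_eq_prod_diff_mult_fact:
  "m \<le> n \<Longrightarrow> fact n = (\<Prod>i<m. n - i) * (fact (n - m) :: nat)"
proof (induction m)
  case (Suc m)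
  then have "fact (n - m) = (n - m) * (fact (n - Suc m) :: nat)"
    by (metis Suc_diff_Suc Suc_le_lessD fact_Suc of_nat_id)
  then show ?case
    using Suc by (simp add: mult.assoc)
qed simp

lemma prod_list_map_eq_prod_count:
  assumes "set xs \<subseteq> X" "finite X"
  shows "prod_list (map f xs) = (\<Prod>x\<in>X. f x ^ count_list xs x)"
proof -
  have "prod_list (map f xs) = (\<Prod>x\<in>set xs. f x ^ count_list xs x)"
    using image_prod_mset_multiplicity[of f "mset xs"]
    by (simp add: prod_mset_prod_list count_mset flip: mset_map)
  also have "\<dots> = (\<Prod>x\<in>X. f x ^ count_list xs x)"
    using assms by (intro prod.mono_neutral_left) auto
  finally show ?thesis .
qed

lemma sorted_count_list_eqI:
  assumes "sorted xs" "sorted ys" "\<And>v. count_list xs v = count_list ys v"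
  shows "xs = ys"
proof -
  have "mset xs = mset ys"
    using assms(3) by (simp add: multiset_eq_iff count_mset)
  then show ?thesis
    using assms(1,2) properties_for_sort sorted_sort_id by metis
qed

lemma set_partition_subset:
  assumes "L \<in> partitions_of k"
  shows "set L \<subseteq> {1..k}"
  using assms member_le_sum_list[of _ L] by (fastforce simp: partitions_of_def Suc_le_eq)

lemma finite_partitions_of: "finite (partitions_of k)"
proof -
  have "length L \<le> sum_list L" if "\<forall>x\<in>set L. 0 < x" for L :: "nat list"
    using that by (induction L) auto
  then have "partitions_of k \<subseteq> {L. set L \<subseteq> {1..k} \<and> length L \<le> k}"
    using set_partition_subset by (auto simp: partitions_of_def)
  then show ?thesis
    by (rule finite_subset) (simp add: finite_lists_length_le)
qed

lemma C_stb_eq_prod_count: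
  assumes "set L \<subseteq> X" "finite X"
  shows "C_stb L = (\<Prod>v\<in>X. fact (count_list L v))"
  unfolding C_stb_def using assms by (intro prod.mono_neutral_left) auto

definition partition_of_exponents :: "nat \<Rightarrow> (nat \<Rightarrow> nat) \<Rightarrow> nat list" where
  "partition_of_exponents k j = concat (map (\<lambda>v. replicate (j (Suc v)) v) [1..<Suc k])"

lemma count_list_partition_of_exponents:
  "count_list (partition_of_exponents k j) v = (if v \<in> {1..k} then j (Suc v) else 0)"
  by (induction k) (auto simp: partition_of_exponents_def count_list_eq_length_filter le_Suc_eq)

lemma set_partition_of_exponents: "set (partition_of_exponents k j) \<subseteq> {1..k}"
  by (auto simp: partition_of_exponents_def)

lemma sorted_partition_of_exponents: "sorted (partition_of_exponents k j)"
proof (induction k)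
  case (Suc k)
  then show ?case
    using set_partition_of_exponents[of k j]
    by (auto simp: partition_of_exponents_def sorted_append)
qed (simp add: partition_of_exponents_def)

lemma length_partition_of_exponents:
  "length (partition_of_exponents k j) = (\<Sum>v\<in>{1..k}. j (Suc v))"
  using sum_count_set[OF set_partition_of_exponents, of k j]
  by (simp add: count_list_partition_of_exponents)

lemma sum_list_partition_of_exponents:
  "sum_list (partition_of_exponents k j) = (\<Sum>v\<in>{1..k}. v * j (Suc v))"
  using sum_list_map_eq_sum_count2[of "partition_of_exponents k j" "{1..k}" "\<lambda>v. v"]
    set_partition_of_exponents[of k j]
  by (simp add: count_list_partition_of_exponents mult.commute)

definition exponents_of_partition :: "nat \<Rightarrow> nat \<Rightarrow> nat list \<Rightarrow> nat \<Rightarrow> nat" where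
  "exponents_of_partition k N L =
     (\<lambda>i\<in>{1..Suc k}. if i = 1 then N - length L else count_list L (i - 1))"

definition bell_exponents :: "nat \<Rightarrow> nat \<Rightarrow> (nat \<Rightarrow> nat) set" where
  "bell_exponents k N = {j \<in> {1..Suc k} \<rightarrow>\<^sub>E {0..N}.
     (\<Sum>i\<in>{1..Suc k}. j i) = N \<and> (\<Sum>i\<in>{1..Suc k}. i * j i) = k + N}"

(* Stated at Suc 0 because simp rewrites the argument 1 :: nat to Suc 0 here (One_nat_def). *)
lemma exponents_of_partition_1: "exponents_of_partition k N L (Suc 0) = N - length L"
  by (simp add: exponents_of_partition_def)

lemma exponents_of_partition_Suc:
  "v \<in> {1..k} \<Longrightarrow> exponents_of_partition k N L (Suc v) = count_list L v"
  by (simp add: exponents_of_partition_def)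

lemma bell_exponents_iff:
  "j \<in> bell_exponents k N \<longleftrightarrow> j \<in> {1..Suc k} \<rightarrow>\<^sub>E {0..N} \<and>
     j 1 + (\<Sum>v\<in>{1..k}. j (Suc v)) = N \<and> (\<Sum>v\<in>{1..k}. v * j (Suc v)) = k"
proof -
  have "(\<Sum>i\<in>{1..Suc k}. i * j i) = j 1 + (\<Sum>v\<in>{1..k}. j (Suc v)) + (\<Sum>v\<in>{1..k}. v * j (Suc v))"
    unfolding sum_atLeast1_Suc_atMost by (simp add: sum.distrib)
  moreover have "(\<Sum>i\<in>{1..Suc k}. j i) = j 1 + (\<Sum>v\<in>{1..k}. j (Suc v))"
    by (rule sum_atLeast1_Suc_atMost)
  ultimately show ?thesis
    unfolding bell_exponents_def mem_Collect_eq by linarith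
qed

lemma exponents_of_partition_mem:
  assumes L: "L \<in> partitions_of k" and len: "length L \<le> N"
  shows "exponents_of_partition k N L \<in> bell_exponents k N"
proof -
  have set: "set L \<subseteq> {1..k}"
    using L by (rule set_partition_subset)
  have "(\<Sum>v\<in>{1..k}. exponents_of_partition k N L (Suc v)) = length L"
    using sum_count_set[OF set] by (simp add: exponents_of_partition_Suc)
  moreover have "(\<Sum>v\<in>{1..k}. v * exponents_of_partition k N L (Suc v)) = k"
    using sum_list_map_eq_sum_count2[OF set, of "\<lambda>v. v"] L
    by (simp add: exponents_of_partition_Suc partitions_of_def mult.commute)
  moreover have "exponents_of_partition k N L \<in> {1..Suc k} \<rightarrow>\<^sub>E {0..N}"
    using le_trans[OF count_le_length len] by (auto simp: exponents_of_partition_def)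
  ultimately show ?thesis
    using len by (simp add: bell_exponents_iff exponents_of_partition_1)
qed

lemma partition_of_exponents_mem:
  assumes "j \<in> bell_exponents k N"
  shows "partition_of_exponents k j \<in> partitions_of k" "length (partition_of_exponents k j) \<le> N"
  using assms set_partition_of_exponents[of k j]
  by (auto simp: partitions_of_def bell_exponents_iff sorted_partition_of_exponents sum_list_partition_of_exponents length_partition_of_exponents)

lemma partition_of_exponents_of_partition:
  assumes "L \<in> partitions_of k"
  shows "partition_of_exponents k (exponents_of_partition k N L) = L"
proof (rule sorted_count_list_eqI)
  show "sorted (partition_of_exponents k (exponents_of_partition k N L))"
    by (rule sorted_partition_of_exponents)
  show "sorted L"
    using assms by (simp add: partitions_of_def)
  show "count_list (partition_of_exponents k (exponents_of_partition k N L)) v = count_list L v" for v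
    using set_partition_subset[OF assms]
    by (auto simp: count_list_partition_of_exponents exponents_of_partition_Suc count_list_0_iff)
qed

lemma exponents_of_partition_of_exponents:
  assumes j: "j \<in> bell_exponents k N"
  shows "exponents_of_partition k N (partition_of_exponents k j) = j"
proof
  fix i show "exponents_of_partition k N (partition_of_exponents k j) i = j i"
  proof (cases "i \<in> {1..Suc k}")
    case True
    show ?thesis
    proof (cases "i = 1")
      case True
      then show ?thesis
        using j by (auto simp: exponents_of_partition_1 length_partition_of_exponents bell_exponents_iff)
    next
      case False
      then obtain v where "i = Suc v" "v \<in> {1..k}"
        using \<open>i \<in> {1..Suc k}\<close> by (cases i) auto
      then show ?thesis
        by (simp add: exponents_of_partition_Suc count_list_partition_of_exponents)
    qed
  next
    case False
    have "j \<in> {1..Suc k} \<rightarrow>\<^sub>E {0..N}"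
      using j by (simp add: bell_exponents_def)
    then have "j i = undefined"
      using False by (rule PiE_arb)
    then show ?thesis
      using False by (auto simp: exponents_of_partition_def)
  qed
qed

lemma bell_term_exponents_of_partition:
  fixes x :: "nat \<Rightarrow> complex"
  assumes L: "L \<in> partitions_of k" and len: "length L \<le> N"
  defines "j \<equiv> exponents_of_partition k N L"
  shows "of_nat (fact N) / of_nat (\<Prod>i\<in>{1..Suc k}. fact (j i)) * (\<Prod>i\<in>{1..Suc k}. x i ^ j i)
    = of_nat (\<Prod>i<length L. N - i) / of_nat (C_stb L) * x 1 ^ (N - length L)
        * prod_list (map (\<lambda>v. x (Suc v)) L)"
proof -
  have set: "set L \<subseteq> {1..k}"
    using L by (rule set_partition_subset)
  have "(\<Prod>i\<in>{1..Suc k}. fact (j i)) = fact (N - length L) * C_stb L"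
    unfolding prod_atLeast1_Suc_atMost C_stb_eq_prod_count[OF set finite_atLeastAtMost]
    by (simp add: j_def exponents_of_partition_1 exponents_of_partition_Suc)
  moreover have "(\<Prod>i\<in>{1..Suc k}. x i ^ j i) = x 1 ^ (N - length L) * prod_list (map (\<lambda>v. x (Suc v)) L)"
    unfolding prod_atLeast1_Suc_atMost prod_list_map_eq_prod_count[OF set finite_atLeastAtMost]
    by (simp add: j_def exponents_of_partition_1 exponents_of_partition_Suc)
  moreover have "fact N = (\<Prod>i<length L. N - i) * fact (N - length L)"
    using len by (rule fact_eq_prod_diff_mult_fact)
  moreover have "C_stb L \<noteq> 0"
    by (simp add: C_stb_def)
  ultimately show ?thesis
    by (simp add: field_simps)
qed

lemma ord_bell_eq_sum_partitions:
  fixes x :: "nat \<Rightarrow> complex"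
  shows "ord_bell (k + N) N x = (\<Sum>L\<in>partitions_of k.
    of_nat (\<Prod>i<length L. N - i) / of_nat (C_stb L) * x 1 ^ (N - length L)
      * prod_list (map (\<lambda>v. x (Suc v)) L))"
    (is "_ = (\<Sum>L\<in>_. ?term L)")
proof -
  have "ord_bell (k + N) N x = (\<Sum>j\<in>bell_exponents k N.
      of_nat (fact N) / of_nat (\<Prod>i\<in>{1..Suc k}. fact (j i)) * (\<Prod>i\<in>{1..Suc k}. x i ^ j i))"
    (is "_ = (\<Sum>j\<in>_. ?bell_term j)")
    by (simp add: ord_bell_def bell_exponents_def)
  also have "\<dots> = (\<Sum>L | L \<in> partitions_of k \<and> length L \<le> N. ?term L)"
  proof (rule sum.reindex_bij_witness[where i = "partition_of_exponents k"
        and j = "exponents_of_partition k N", symmetric])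
    fix L assume "L \<in> {L. L \<in> partitions_of k \<and> length L \<le> N}"
    then have L: "L \<in> partitions_of k" "length L \<le> N"
      by auto
    show "partition_of_exponents k (exponents_of_partition k N L) = L"
      using L(1) by (rule partition_of_exponents_of_partition)
    show "exponents_of_partition k N L \<in> bell_exponents k N"
      using L by (rule exponents_of_partition_mem)
    show "?bell_term (exponents_of_partition k N L) = ?term L"
      using L by (rule bell_term_exponents_of_partition)
  next
    fix j assume j: "j \<in> bell_exponents k N"
    then show "exponents_of_partition k N (partition_of_exponents k j) = j"
      by (rule exponents_of_partition_of_exponents)
    show "partition_of_exponents k j \<in> {L. L \<in> partitions_of k \<and> length L \<le> N}"
      using partition_of_exponents_mem[OF j] by simp
  qed
  also have "\<dots> = (\<Sum>L\<in>partitions_of k. ?term L)"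
    by (rule sum.mono_neutral_left) (auto simp: finite_partitions_of)
  finally show ?thesis .
qed

theorem mainTheorem3:
  fixes k N :: nat and a :: "nat \<Rightarrow> complex"
  shows "ord_bell (k + N) N (\<lambda>i. if i = 1 then 1 else a (i - 1)) =
    (\<Sum>L\<in>partitions_of k. (1 / of_nat (C_stb L)) *
       (\<Sum>\<sigma>\<in>{\<sigma>. \<sigma> permutes {..<length L}}.
          of_int (sign \<sigma>) * A_sigma_L \<sigma> L (\<lambda>n j. if n \<le> N then a j else 0)))"
    (is "_ = ?rhs")
proof -
  let ?x = "\<lambda>i. if i = 1 then 1 else a (i - 1)"
  have "ord_bell (k + N) N ?x = (\<Sum>L\<in>partitions_of k.
      of_nat (\<Prod>i<length L. N - i) / of_nat (C_stb L) * ?x 1 ^ (N - length L)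
        * prod_list (map (\<lambda>v. ?x (Suc v)) L))"
    by (rule ord_bell_eq_sum_partitions)
  also have "\<dots> = (\<Sum>L\<in>partitions_of k.
      of_nat (\<Prod>i<length L. N - i) / of_nat (C_stb L) * prod_list (map a L))"
  proof (rule sum.cong[OF refl])
    fix L assume "L \<in> partitions_of k"
    then have map_eq: "map (\<lambda>v. ?x (Suc v)) L = map a L"
      by (auto simp: partitions_of_def)
    show "of_nat (\<Prod>i<length L. N - i) / of_nat (C_stb L) * ?x 1 ^ (N - length L)
        * prod_list (map (\<lambda>v. ?x (Suc v)) L)
      = of_nat (\<Prod>i<length L. N - i) / of_nat (C_stb L) * prod_list (map a L)"
      by (simp only: map_eq) simp
  qed
  also have "\<dots> = ?rhs"
    by (simp add: sum_sign_A_sigma_L_truncated)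
  finally show ?thesis .
qed

end
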